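(* Let $G$ be an abelian group, let $H\leq G$ be a subgroup with $|H|\geq 3$, and let $Y\subseteq G$ be a finite subset such that $Y\setminus \{y_0\}$ is $H$-periodic (or empty) for some $y_0\in Y$. Then: 1. $Y$ is aperiodic, and $Y=(Y\setminus \{y_0\})\cup \{y_0\}$ is its unique reduced quasi-periodic decomposition. 2. If $Y=Y_1\cup Y_0$ is a $K$-quasi-periodic decomposition (for a nontrivial subgroup $K$, with $Y_0$ the part contained in a $K$-coset), then $y_0\in Y_0$ and $Y_0\setminus \{y_0\}$ is $H$-periodic; moreover, if $|Y_0|\geq 2$, then $H\leq K$. 3. If $A,B\subseteq G$ satisfy $A+B=Y$ and $|A+B|=|A|+|B|-1$, then there are $a_0\in A$ and $b_0\in B$ such that $A\setminus \{a_0\}$ and $B\setminus \{b_0\}$ are $H$-periodic and $a_0+b_0=y_0$.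
   Context: $\mathsf H(A)=\{g\in G:g+A=A\}$ is the stabilizer; $A$ is aperiodic if $\mathsf H(A)$ is trivial, periodic otherwise, and $H$-periodic if it is a union of $H$-cosets. A set $A$ is quasi-periodic if there is a subset $A_\emptyset\subseteq A$ such that $A\setminus A_\emptyset$ is nonempty and periodic and $A_\emptyset$ is contained in a single $\mathsf H(A\setminus A_\emptyset)$-coset. For a nontrivial subgroup $K$, a $K$-quasi-periodic decomposition of $A$ is a partition $A=(A\setminus A_\emptyset)\cup A_\emptyset$ with $A_\emptyset$ a subset of a $K$-coset and $A\setminus A_\emptyset$ $K$-periodic (or empty); a quasi-periodic decomposition is a $K$-quasi-periodic decomposition for some nontrivial $K$; it is reduced if $A_\emptyset$ is not quasi-periodic. $A+B=\{a+b:a\in A,b\in B\}$. *)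

theory Defs
  imports Main
begin

definition subgrp :: "'a::ab_group_add set \<Rightarrow> bool" where
  "subgrp H \<longleftrightarrow> 0 \<in> H \<and> (\<forall>x\<in>H. \<forall>y\<in>H. x + y \<in> H) \<and> (\<forall>x\<in>H. - x \<in> H)"

definition nontrivial_subgrp :: "'a::ab_group_add set \<Rightarrow> bool" where
  "nontrivial_subgrp K \<longleftrightarrow> subgrp K \<and> K \<noteq> {0}"

definition sumset :: "'a::ab_group_add set \<Rightarrow> 'a set \<Rightarrow> 'a set" where
  "sumset A B = {a + b | a b. a \<in> A \<and> b \<in> B}"

definition stab :: "'a::ab_group_add set \<Rightarrow> 'a set" where
  "stab A = {g. (\<lambda>x. g + x) ` A = A}"

definition aperiodic :: "'a::ab_group_add set \<Rightarrow> bool" where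
  "aperiodic A \<longleftrightarrow> stab A = {0}"

definition periodic :: "'a::ab_group_add set \<Rightarrow> bool" where
  "periodic A \<longleftrightarrow> \<not> aperiodic A"

definition periodic_by :: "'a::ab_group_add set \<Rightarrow> 'a set \<Rightarrow> bool" where
  "periodic_by H A \<longleftrightarrow> (\<exists>S. A = (\<Union>x\<in>S. (\<lambda>h. x + h) ` H))"

definition in_one_coset :: "'a::ab_group_add set \<Rightarrow> 'a set \<Rightarrow> bool" where
  "in_one_coset K A \<longleftrightarrow> (\<exists>x. A \<subseteq> (\<lambda>h. x + h) ` K)"

definition quasi_periodic :: "'a::ab_group_add set \<Rightarrow> bool" where
  "quasi_periodic A \<longleftrightarrow>
     (\<exists>A0 \<subseteq> A. A - A0 \<noteq> {} \<and> periodic (A - A0) \<and> in_one_coset (stab (A - A0)) A0)"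

definition qp_decomp :: "'a::ab_group_add set \<Rightarrow> 'a set \<Rightarrow> 'a set \<Rightarrow> 'a set \<Rightarrow> bool" where
  "qp_decomp K A A1 A0 \<longleftrightarrow> nontrivial_subgrp K \<and> A1 \<union> A0 = A \<and> A1 \<inter> A0 = {} \<and>
     A0 \<noteq> {} \<and> in_one_coset K A0 \<and> periodic_by K A1"

definition reduced_qp_decomp :: "'a::ab_group_add set \<Rightarrow> 'a set \<Rightarrow> 'a set \<Rightarrow> 'a set \<Rightarrow> bool" where
  "reduced_qp_decomp K A A1 A0 \<longleftrightarrow> qp_decomp K A A1 A0 \<and> \<not> quasi_periodic A0"

end

theory Submission
  imports Defs
begin

text \<open>Since Y - {y0} is a union of H-cosets, the coset y0 + H meets Y only in y0, and
  everything follows from this. A period of Y, or a K-periodic part of a quasi-periodic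
  decomposition containing y0, would move a point of Y - {y0} onto a point of y0 + H other
  than y0; excluding the latter needs two distinct nonzero elements of H, whence card H \<ge> 3.
  For a critical pair A + B = Y, Kemperman's inequality applied to A + H and B + H, whose
  sumset Y + H has at most card Y - 1 + card H elements, shows that y0 has a unique
  representation a0 + b0 and that A + H = A \<union> (a0 + H), i.e. A - {a0} is H-periodic;
  symmetrically for B.\<close>

section \<open>Subgroups and sumsets\<close>

lemma subgrp_zero_mem: "subgrp H \<Longrightarrow> 0 \<in> H"
  by (simp add: subgrp_def)

lemma subgrp_add_mem: "subgrp H \<Longrightarrow> x \<in> H \<Longrightarrow> y \<in> H \<Longrightarrow> x + y \<in> H"
  by (simp add: subgrp_def)

lemma subgrp_uminus_mem: "subgrp H \<Longrightarrow> x \<in> H \<Longrightarrow> - x \<in> H"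
  by (simp add: subgrp_def)

lemma subgrp_diff_mem: "subgrp H \<Longrightarrow> x \<in> H \<Longrightarrow> y \<in> H \<Longrightarrow> x - y \<in> H"
  by (metis diff_conv_add_uminus subgrp_add_mem subgrp_uminus_mem)

lemma mem_sumset_iff: "z \<in> sumset A B \<longleftrightarrow> (\<exists>a\<in>A. \<exists>b\<in>B. z = a + b)"
  unfolding sumset_def by blast

lemma add_mem_sumset: "a \<in> A \<Longrightarrow> b \<in> B \<Longrightarrow> a + b \<in> sumset A B"
  unfolding sumset_def by blast

lemma sumset_commute: "sumset A B = sumset B A"
  unfolding sumset_def by (auto; metis add.commute)

lemma sumset_eq_image: "sumset A B = (\<lambda>(a, b). a + b) ` (A \<times> B)"
  unfolding sumset_def by auto

lemma sumset_singleton: "sumset {a} H = (+) a ` H"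
  unfolding sumset_def by auto

lemma finite_sumset: "finite A \<Longrightarrow> finite B \<Longrightarrow> finite (sumset A B)"
  by (simp add: sumset_eq_image)

lemma finite_sumset_imp_finite:
  assumes "finite (sumset A B)" and "b \<in> B"
  shows "finite A"
proof -
  have "(\<lambda>x. x + b) ` A \<subseteq> sumset A B"
    using assms(2) by (auto intro: add_mem_sumset)
  then show ?thesis
    using assms(1) finite_imageD finite_subset inj_on_add' by metis
qed

lemma card_le_card_sumset:
  assumes "finite A" "finite B" "b \<in> B"
  shows "card A \<le> card (sumset A B)"
proof -
  have "(\<lambda>x. x + b) ` A \<subseteq> sumset A B"
    using assms(3) by (auto intro: add_mem_sumset)
  then have "card ((\<lambda>x. x + b) ` A) \<le> card (sumset A B)"
    by (intro card_mono finite_sumset assms(1,2))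
  then show ?thesis
    by (simp add: card_image)
qed

lemma sumset_eq_singletonD:
  assumes "sumset A B = {a + b}" "a \<in> A" "b \<in> B"
  shows "A = {a} \<and> B = {b}"
proof -
  have "x = a" if "x \<in> A" for x
    using add_mem_sumset[OF that assms(3)] assms(1) by simp
  moreover have "y = b" if "y \<in> B" for y
    using add_mem_sumset[OF assms(2) that] assms(1) by simp
  ultimately show ?thesis
    using assms(2,3) by blast
qed

lemma sumset_sumset_subgrp:
  assumes "subgrp H"
  shows "sumset (sumset A H) (sumset B H) = sumset (sumset A B) H"
proof
  show "sumset (sumset A H) (sumset B H) \<subseteq> sumset (sumset A B) H"
  proof
    fix z assume "z \<in> sumset (sumset A H) (sumset B H)"
    then obtain x h y k where "x \<in> A" "h \<in> H" "y \<in> B" "k \<in> H" "z = (x + y) + (h + k)"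
      by (auto simp: mem_sumset_iff algebra_simps)
    then show "z \<in> sumset (sumset A B) H"
      using assms by (auto intro: add_mem_sumset subgrp_add_mem)
  qed
  show "sumset (sumset A B) H \<subseteq> sumset (sumset A H) (sumset B H)"
  proof
    fix z assume "z \<in> sumset (sumset A B) H"
    then obtain x y h where "x \<in> A" "y \<in> B" "h \<in> H" "z = (x + h) + y"
      by (auto simp: mem_sumset_iff algebra_simps)
    moreover have "y \<in> sumset B H" if "y \<in> B"
      using add_mem_sumset[OF that subgrp_zero_mem[OF assms]] by simp
    ultimately show "z \<in> sumset (sumset A H) (sumset B H)"
      by (auto intro: add_mem_sumset)
  qed
qed

lemma Un_sumset_subgrp_subset:
  assumes "subgrp H" "R \<subseteq> A"
  shows "A \<union> sumset R H \<subseteq> sumset A H"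
proof -
  have "x \<in> sumset A H" if "x \<in> A" for x
    using add_mem_sumset[OF that subgrp_zero_mem[OF assms(1)]] by simp
  moreover have "sumset R H \<subseteq> sumset A H"
    using assms(2) by (auto simp: sumset_def)
  ultimately show ?thesis
    by blast
qed

lemma card_sumset_subgrp:
  assumes "subgrp H" "finite R" "finite H"
    and incongruent: "\<And>x x'. x \<in> R \<Longrightarrow> x' \<in> R \<Longrightarrow> x' - x \<in> H \<Longrightarrow> x' = x"
  shows "card (sumset R H) = card R * card H"
proof -
  have "inj_on (\<lambda>(x, h). x + h) (R \<times> H)"
  proof (rule inj_onI, clarify)
    fix x h x' h' assume "x \<in> R" "h \<in> H" "x' \<in> R" "h' \<in> H" and eq: "x + h = x' + h'"
    have "x' - x = h - h'"
      using eq by (simp add: algebra_simps)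
    then have "x' - x \<in> H"
      using assms(1) \<open>h \<in> H\<close> \<open>h' \<in> H\<close> by (simp add: subgrp_diff_mem)
    then have "x' = x"
      using incongruent \<open>x \<in> R\<close> \<open>x' \<in> R\<close> by blast
    then show "x = x' \<and> h = h'"
      using eq by simp
  qed
  then show ?thesis
    by (simp add: sumset_eq_image card_image card_cartesian_product)
qed

lemma card_Un_sumset_subgrp:
  assumes "subgrp H" "finite A" "finite H" "R \<subseteq> A"
    and alone: "\<And>x x'. x \<in> R \<Longrightarrow> x' \<in> A \<Longrightarrow> x' - x \<in> H \<Longrightarrow> x' = x"
  shows "card (A \<union> sumset R H) + card R = card A + card R * card H"
proof -
  have "A \<inter> sumset R H = R"
  proof
    show "A \<inter> sumset R H \<subseteq> R"
      using alone by (auto simp: mem_sumset_iff) (metis add_diff_cancel_left')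
    show "R \<subseteq> A \<inter> sumset R H"
      using assms(1,4) add_mem_sumset[of _ R 0 H] by (auto simp: subgrp_zero_mem)
  qed
  moreover have "card (sumset R H) = card R * card H"
    using assms by (intro card_sumset_subgrp) (auto intro: finite_subset)
  moreover have "finite (sumset R H)"
    using assms by (intro finite_sumset) (auto intro: finite_subset)
  ultimately show ?thesis
    using card_Un_Int[OF assms(2), of "sumset R H"] by simp
qed

section \<open>Periodic sets and quasi-periodic decompositions\<close>

lemma periodic_by_iff_add_closed:
  assumes "subgrp H"
  shows "periodic_by H X \<longleftrightarrow> (\<forall>x\<in>X. \<forall>h\<in>H. x + h \<in> X)"
proof
  assume "periodic_by H X"
  then obtain S where S: "X = (\<Union>s\<in>S. (+) s ` H)"
    by (auto simp: periodic_by_def)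
  show "\<forall>x\<in>X. \<forall>h\<in>H. x + h \<in> X"
  proof (intro ballI)
    fix x h assume "x \<in> X" "h \<in> H"
    then obtain s k where "s \<in> S" "k \<in> H" "x + h = s + (k + h)"
      using S by (auto simp: add.assoc)
    moreover have "k + h \<in> H"
      using assms \<open>k \<in> H\<close> \<open>h \<in> H\<close> by (rule subgrp_add_mem)
    ultimately show "x + h \<in> X"
      using S by blast
  qed
next
  assume "\<forall>x\<in>X. \<forall>h\<in>H. x + h \<in> X"
  moreover have "x \<in> (+) x ` H" for x
    using subgrp_zero_mem[OF assms] by force
  ultimately have "X = (\<Union>x\<in>X. (+) x ` H)"
    by blast
  then show "periodic_by H X"
    unfolding periodic_by_def by blast
qed

lemma periodic_by_Diff_singleton:
  assumes "subgrp H" "sumset A H \<subseteq> A \<union> (+) a ` H"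
    and alone: "\<And>x. x \<in> A \<Longrightarrow> x - a \<in> H \<Longrightarrow> x = a"
  shows "periodic_by H (A - {a})"
proof -
  have "x + h \<in> A - {a}" if "x \<in> A - {a}" "h \<in> H" for x h
  proof -
    have "x + h \<notin> (+) a ` H"
    proof
      assume "x + h \<in> (+) a ` H"
      then obtain k where "k \<in> H" "x + h = a + k"
        by blast
      then have "x - a = k - h"
        by (simp add: algebra_simps)
      then have "x - a \<in> H"
        using subgrp_diff_mem[OF assms(1) \<open>k \<in> H\<close> \<open>h \<in> H\<close>] by simp
      then have "x = a"
        using alone that(1) by blast
      then show False
        using that(1) by simp
    qed
    moreover have "x + h \<in> sumset A H"
      using that by (simp add: add_mem_sumset)
    moreover have "a \<in> (+) a ` H"
      using subgrp_zero_mem[OF assms(1)] by force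
    ultimately show ?thesis
      using assms(2) by blast
  qed
  then show ?thesis
    using periodic_by_iff_add_closed[OF assms(1)] by blast
qed

lemma periodic_by_empty: "periodic_by H {}"
  unfolding periodic_by_def by blast

lemma finite_periodic_by_eq_empty:
  assumes "periodic_by H X" "finite X" "infinite H"
  shows "X = {}"
proof -
  obtain S where S: "X = (\<Union>s\<in>S. (+) s ` H)"
    using assms(1) by (auto simp: periodic_by_def)
  have "finite ((+) s ` H)" if "s \<in> S" for s
    using assms(2) S that by (metis UN_upper finite_subset)
  then have "S = {}"
    using assms(3) finite_image_iff[OF inj_on_add] by blast
  then show ?thesis
    using S by simp
qed

lemma subgrp_subset_stab:
  assumes "subgrp H" "periodic_by H X"
  shows "H \<subseteq> stab X"
proof
  fix h assume "h \<in> H"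
  have closed: "\<forall>x\<in>X. \<forall>h\<in>H. x + h \<in> X"
    using assms by (simp add: periodic_by_iff_add_closed)
  have "(+) h ` X \<subseteq> X"
    using closed \<open>h \<in> H\<close> by (auto simp: add.commute)
  moreover have "x \<in> (+) h ` X" if "x \<in> X" for x
  proof
    show "x = h + (x + - h)"
      by simp
    show "x + - h \<in> X"
      using closed that subgrp_uminus_mem[OF assms(1) \<open>h \<in> H\<close>] by blast
  qed
  ultimately have "(+) h ` X = X"
    by blast
  then show "h \<in> stab X"
    by (simp add: stab_def)
qed

lemma periodic_by_imp_periodic:
  assumes "subgrp H" "H \<noteq> {0}" "periodic_by H X"
  shows "periodic X"
  using subgrp_subset_stab[OF assms(1,3)] assms(1,2) subgrp_zero_mem
  by (auto simp: periodic_def aperiodic_def)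

lemma in_one_coset_singleton: "0 \<in> K \<Longrightarrow> in_one_coset K {x}"
  unfolding in_one_coset_def by force

lemma zero_mem_stab: "0 \<in> stab X"
  by (simp add: stab_def)

lemma in_one_coset_diff_mem:
  assumes "subgrp K" "in_one_coset K X" "x \<in> X" "y \<in> X"
  shows "x - y \<in> K"
proof -
  obtain c where "X \<subseteq> (+) c ` K"
    using assms(2) by (auto simp: in_one_coset_def)
  then obtain k l where "k \<in> K" "l \<in> K" "x = c + k" "y = c + l"
    using assms(3,4) by blast
  then show ?thesis
    using assms(1) by (simp add: subgrp_diff_mem)
qed

lemma not_quasi_periodic_singleton: "\<not> quasi_periodic {x}"
proof
  assume "quasi_periodic {x}"
  then obtain X0 where "X0 \<subseteq> {x}" "{x} - X0 \<noteq> {}" "periodic ({x} - X0)"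
    by (auto simp: quasi_periodic_def)
  then have "periodic {x}"
    by (metis Diff_empty Diff_eq_empty_iff subset_singletonD)
  moreover have "stab {x} = {0}"
    by (auto simp: stab_def)
  ultimately show False
    by (simp add: periodic_def aperiodic_def)
qed

section \<open>Kemperman's inequality\<close>

definition reps :: "'a::ab_group_add set \<Rightarrow> 'a set \<Rightarrow> 'a \<Rightarrow> 'a set" where
  "reps A B c = {x \<in> A. c - x \<in> B}"

lemma card_reps_commute: "card (reps B A c) = card (reps A B c)"
proof -
  have "reps B A c = (\<lambda>x. c - x) ` reps A B c"
    unfolding reps_def by force
  moreover have "inj_on (\<lambda>x. c - x) (reps A B c)"
    by (auto simp: inj_on_def)
  ultimately show ?thesis
    by (simp add: card_image)
qed

lemma card_e_transform:
  fixes A B :: "'a::cancel_semigroup_add set"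
  assumes "finite A" "finite B"
  shows "card (A \<union> (+) e ` B) + card {y \<in> B. e + y \<in> A} = card A + card B"
proof -
  have "A \<inter> (+) e ` B = (+) e ` {y \<in> B. e + y \<in> A}"
    by auto
  moreover have "card ((+) e ` X) = card X" for X
    by (simp add: card_image)
  ultimately show ?thesis
    using card_Un_Int[OF assms(1), of "(+) e ` B"] assms(2) by simp
qed

lemma sumset_e_transform_subset:
  "sumset (A \<union> (+) e ` B) {y \<in> B. e + y \<in> A} \<subseteq> sumset A B"
proof
  fix z assume "z \<in> sumset (A \<union> (+) e ` B) {y \<in> B. e + y \<in> A}"
  then obtain x y where x: "x \<in> A \<union> (+) e ` B" and y: "y \<in> B" "e + y \<in> A" and z: "z = x + y"
    by (auto simp: mem_sumset_iff)
  show "z \<in> sumset A B"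
  proof (cases "x \<in> A")
    case True
    then show ?thesis
      using y z by (simp add: add_mem_sumset)
  next
    case False
    then obtain w where "w \<in> B" "x = e + w"
      using x by blast
    then have "z = (e + y) + w"
      using z by (simp add: algebra_simps)
    then show ?thesis
      using y \<open>w \<in> B\<close> by (simp add: add_mem_sumset)
  qed
qed

lemma card_reps_e_transform_le:
  assumes "finite A"
  shows "card (reps (A \<union> (+) e ` B) {y \<in> B. e + y \<in> A} c) \<le> card (reps A B c)"
proof -
  define f where "f x = (if x \<in> A then x else e + (c - x))" for x
  let ?R = "reps (A \<union> (+) e ` B) {y \<in> B. e + y \<in> A} c"
  have swap: "e + (c - x) \<in> A" if "x \<in> ?R" for x
    using that by (simp add: reps_def)
  have "inj_on f ?R"
  proof (rule inj_onI)
    fix x1 x2 assume "x1 \<in> ?R" "x2 \<in> ?R" "f x1 = f x2"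
    then show "x1 = x2"
      using swap[of x1] swap[of x2] by (auto simp: f_def split: if_splits)
  qed
  moreover have "f ` ?R \<subseteq> reps A B c"
  proof
    fix z assume "z \<in> f ` ?R"
    then obtain x where x: "x \<in> ?R" and z: "z = f x"
      by blast
    show "z \<in> reps A B c"
    proof (cases "x \<in> A")
      case True
      then show ?thesis
        using x z by (simp add: f_def reps_def)
    next
      case False
      then obtain w where "w \<in> B" "x = e + w"
        using x by (auto simp: reps_def)
      moreover have "c - (e + (c - x)) = x - e"
        by (simp add: algebra_simps)
      ultimately show ?thesis
        using False swap[OF x] z by (simp add: f_def reps_def)
    qed
  qed
  ultimately show ?thesis
    using assms by (simp add: reps_def card_inj_on_le)
qed

lemma card_le_card_reps_if_translates_closed:
  assumes "finite A" "a \<in> A" "b \<in> B"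
    and closed: "\<And>e. e + b \<in> A \<Longrightarrow> (+) e ` B \<subseteq> A"
  shows "card B \<le> card (reps A B (a + b))"
proof -
  have "a + b - y \<in> A" if "y \<in> B" for y
  proof -
    have "(+) (y - b) ` A \<subseteq> A"
    proof
      fix z assume "z \<in> (+) (y - b) ` A"
      then obtain x where "x \<in> A" "z = (x - b) + y"
        by (auto simp: algebra_simps)
      moreover have "(+) (x - b) ` B \<subseteq> A"
        using \<open>x \<in> A\<close> by (intro closed) simp
      ultimately show "z \<in> A"
        using that by blast
    qed
    moreover have "card ((+) (y - b) ` A) = card A"
      by (simp add: card_image)
    ultimately have "(+) (y - b) ` A = A"
      by (rule card_subset_eq[OF assms(1)])
    then obtain x where "x \<in> A" "a = (y - b) + x"
      using assms(2) by (metis imageE)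
    then show ?thesis
      by (simp add: algebra_simps)
  qed
  then have "(\<lambda>y. a + b - y) ` B \<subseteq> reps A B (a + b)"
    by (auto simp: reps_def)
  moreover have "inj_on (\<lambda>y. a + b - y) B"
    by (auto simp: inj_on_def)
  moreover have "finite (reps A B (a + b))"
    using assms(1) by (simp add: reps_def)
  ultimately show ?thesis
    by (metis card_inj_on_le)
qed

text \<open>Induction on card B via the e-transform
  (A, B) \<mapsto> (A \<union> (e + B), {y \<in> B. e + y \<in> A}), which preserves card A + card B, shrinks the
  sumset and does not increase the number of representations of a + b. If no e-transform makes
  B smaller, then A is invariant under all translations by differences of elements of B, so
  every element of B yields a representation of a + b.\<close>

theorem kemperman_inequality:
  assumes "finite A" "finite B" "a \<in> A" "b \<in> B"
  shows "card A + card B \<le> card (sumset A B) + card (reps A B (a + b))"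
  using assms
proof (induction "card B" arbitrary: A B rule: less_induct)
  case less
  show ?case
  proof (cases "\<exists>e. e + b \<in> A \<and> \<not> (+) e ` B \<subseteq> A")
    case True
    then obtain e where e: "e + b \<in> A" "\<not> (+) e ` B \<subseteq> A"
      by blast
    define A' where "A' = A \<union> (+) e ` B"
    define B' where "B' = {y \<in> B. e + y \<in> A}"
    have "card B' < card B"
      using e(2) less.prems(2) by (intro psubset_card_mono) (auto simp: B'_def)
    moreover have "finite A'" "finite B'" "a \<in> A'" "b \<in> B'"
      using less.prems e(1) by (auto simp: A'_def B'_def)
    ultimately have "card A' + card B' \<le> card (sumset A' B') + card (reps A' B' (a + b))"
      using less.hyps by blast
    moreover have "card A' + card B' = card A + card B"
      unfolding A'_def B'_def using less.prems(1,2) by (rule card_e_transform)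
    moreover have "card (sumset A' B') \<le> card (sumset A B)"
      unfolding A'_def B'_def using less.prems
      by (intro card_mono finite_sumset sumset_e_transform_subset)
    moreover have "card (reps A' B' (a + b)) \<le> card (reps A B (a + b))"
      unfolding A'_def B'_def using less.prems(1) by (rule card_reps_e_transform_le)
    ultimately show ?thesis
      by linarith
  next
    case False
    then have "card B \<le> card (reps A B (a + b))"
      using less.prems by (intro card_le_card_reps_if_translates_closed) auto
    moreover have "card A \<le> card (sumset A B)"
      using less.prems by (intro card_le_card_sumset)
    ultimately show ?thesis
      by linarith
  qed
qed

section \<open>Sets that are periodic off one point\<close>

lemma obtain_two_nonzero_elements:
  fixes H :: "'a::zero set"
  assumes "infinite H \<or> 3 \<le> card H"
  obtains h1 h2 where "h1 \<in> H" "h2 \<in> H" "h1 \<noteq> 0" "h2 \<noteq> 0" "h1 \<noteq> h2"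
proof -
  have not_small: "\<not> H \<subseteq> {0, h}" for h
  proof
    assume small: "H \<subseteq> {0, h}"
    then have "finite H"
      by (rule finite_subset) simp
    moreover have "card H \<le> 2"
      using card_mono[OF _ small] by (simp add: card_insert_if split: if_splits)
    ultimately show False
      using assms by simp
  qed
  obtain h1 where "h1 \<in> H" "h1 \<noteq> 0"
    using not_small[of 0] by blast
  moreover obtain h2 where "h2 \<in> H" "h2 \<noteq> 0" "h2 \<noteq> h1"
    using not_small[of h1] by blast
  ultimately show thesis
    using that by blast
qed

lemma eq_one_if_mult_add_le:
  fixes r n :: nat
  assumes "r * n + 2 \<le> n + 2 * r" "3 \<le> n" "1 \<le> r"
  shows "r = 1"
proof -
  obtain s where "r = Suc s"
    using assms(3) by (cases r) auto
  then have "s * 3 \<le> s * n" "s * n \<le> 2 * s"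
    using assms(1,2) by simp_all
  then have "s = 0"
    by linarith
  then show ?thesis
    using \<open>r = Suc s\<close> by simp
qed

locale punctured_periodic =
  fixes H Y :: "'a::ab_group_add set" and y0 :: 'a
  assumes subgrp: "subgrp H"
    and large: "infinite H \<or> 3 \<le> card H"
    and y0_mem: "y0 \<in> Y"
    and periodic_punctured: "periodic_by H (Y - {y0})"
begin

lemma add_mem_punctured: "x \<in> Y - {y0} \<Longrightarrow> h \<in> H \<Longrightarrow> x + h \<in> Y - {y0}"
  using periodic_punctured unfolding periodic_by_iff_add_closed[OF subgrp] by blast

lemma eq_zero_if_add_mem:
  assumes "h \<in> H" "y0 + h \<in> Y"
  shows "h = 0"
proof (rule ccontr)
  assume "h \<noteq> 0"
  then have "y0 + h \<in> Y - {y0}"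
    using assms(2) by simp
  then have "(y0 + h) + - h \<in> Y - {y0}"
    using add_mem_punctured subgrp_uminus_mem[OF subgrp assms(1)] by blast
  then show False
    by simp
qed

lemma nontrivial: "H \<noteq> {0}"
  using large by (rule obtain_two_nonzero_elements) blast

lemma aperiodic: "aperiodic Y"
proof -
  obtain h where h: "h \<in> H" "h \<noteq> 0"
    using nontrivial subgrp_zero_mem[OF subgrp] by blast
  have "g = 0" if "g \<in> stab Y" for g
  proof (rule ccontr)
    assume "g \<noteq> 0"
    have shift: "(+) g ` Y = Y"
      using that by (simp add: stab_def)
    then obtain w where w: "w \<in> Y" "y0 = g + w"
      using y0_mem by (metis imageE)
    then have "w + h \<in> Y"
      using add_mem_punctured[of w h] \<open>g \<noteq> 0\<close> h(1) by auto
    then have "g + (w + h) \<in> Y"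
      using shift by blast
    then have "y0 + h \<in> Y"
      using w(2) by (simp add: add.assoc)
    then show False
      using eq_zero_if_add_mem h by blast
  qed
  then show ?thesis
    using zero_mem_stab[of Y] by (auto simp: aperiodic_def)
qed

lemma reduced_qp_decomp_punctured: "reduced_qp_decomp H Y (Y - {y0}) {y0}"
proof -
  have "nontrivial_subgrp H"
    using subgrp nontrivial by (simp add: nontrivial_subgrp_def)
  moreover have "in_one_coset H {y0}"
    by (rule in_one_coset_singleton[OF subgrp_zero_mem[OF subgrp]])
  ultimately show ?thesis
    using y0_mem periodic_punctured not_quasi_periodic_singleton
    unfolding reduced_qp_decomp_def qp_decomp_def by blast
qed

context
  fixes K Y1 Y0
  assumes qp: "qp_decomp K Y Y1 Y0"
begin

lemma qp_parts: "Y1 \<union> Y0 = Y" "Y1 \<inter> Y0 = {}"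
  using qp by (auto simp: qp_decomp_def)

lemma subgrp_qp: "subgrp K"
  using qp by (simp add: qp_decomp_def nontrivial_subgrp_def)

lemma add_mem_periodic_part: "x \<in> Y1 \<Longrightarrow> k \<in> K \<Longrightarrow> x + k \<in> Y1"
  using qp unfolding qp_decomp_def periodic_by_iff_add_closed[OF subgrp_qp] by blast

lemma diff_mem_coset_part: "x \<in> Y0 \<Longrightarrow> z \<in> Y0 \<Longrightarrow> x - z \<in> K"
  using qp in_one_coset_diff_mem[OF subgrp_qp] by (auto simp: qp_decomp_def)

text \<open>If y0 were in the K-periodic part, then so would be y0 + k for some k \<noteq> 0 in K; the
  punctured H-coset of y0 + k would then have to lie in the coset part, so two of its points
  differ by a nonzero element of H \<inter> K, which moves y0 inside Y.\<close>

lemma y0_mem_coset_part: "y0 \<in> Y0"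
proof (rule ccontr)
  assume "y0 \<notin> Y0"
  then have "y0 \<in> Y1"
    using y0_mem qp_parts by blast
  obtain k where "k \<in> K" "k \<noteq> 0"
    using qp subgrp_zero_mem[OF subgrp_qp] by (auto simp: qp_decomp_def nontrivial_subgrp_def)
  then have yk: "y0 + k \<in> Y - {y0}"
    using add_mem_periodic_part[OF \<open>y0 \<in> Y1\<close>] qp_parts by auto
  have shifted_in_Y0: "y0 + k + h \<in> Y0" if "h \<in> H" "h \<noteq> 0" for h
  proof (rule ccontr)
    assume "y0 + k + h \<notin> Y0"
    then have "y0 + k + h \<in> Y1"
      using add_mem_punctured[OF yk \<open>h \<in> H\<close>] qp_parts by blast
    then have "(y0 + k + h) + - k \<in> Y1"
      using add_mem_periodic_part subgrp_uminus_mem[OF subgrp_qp \<open>k \<in> K\<close>] by blast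
    then have "y0 + h \<in> Y"
      using qp_parts by (auto simp: algebra_simps)
    then show False
      using eq_zero_if_add_mem that by blast
  qed
  obtain h1 h2 where h: "h1 \<in> H" "h2 \<in> H" "h1 \<noteq> 0" "h2 \<noteq> 0" "h1 \<noteq> h2"
    using large by (rule obtain_two_nonzero_elements)
  have "(y0 + k + h1) - (y0 + k + h2) \<in> K"
    using diff_mem_coset_part shifted_in_Y0 h by blast
  then have "y0 + (h1 - h2) \<in> Y"
    using add_mem_periodic_part[OF \<open>y0 \<in> Y1\<close>] qp_parts by auto
  moreover have "h1 - h2 \<in> H"
    using subgrp_diff_mem[OF subgrp] h(1,2) .
  ultimately have "h1 - h2 = 0"
    by (rule eq_zero_if_add_mem[rotated])
  then show False
    using h(5) by simp
qed

lemma add_mem_coset_part: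
  assumes "z \<in> Y0 - {y0}" "h \<in> H"
  shows "z + h \<in> Y0 - {y0}"
proof -
  have "z + h \<notin> Y1"
  proof
    assume "z + h \<in> Y1"
    then have "(z + h) + (y0 - z) \<in> Y1"
      using add_mem_periodic_part diff_mem_coset_part y0_mem_coset_part assms(1) by blast
    then have "y0 + h \<in> Y"
      using qp_parts by (auto simp: algebra_simps)
    then have "h = 0"
      using eq_zero_if_add_mem assms(2) by blast
    then show False
      using \<open>z + h \<in> Y1\<close> assms(1) qp_parts by auto
  qed
  moreover have "z + h \<in> Y - {y0}"
    using add_mem_punctured assms qp_parts by blast
  ultimately show ?thesis
    using qp_parts by blast
qed

lemma periodic_by_coset_part: "periodic_by H (Y0 - {y0})"
  unfolding periodic_by_iff_add_closed[OF subgrp] using add_mem_coset_part by blast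

lemma subgrp_subset_if_two_le_card:
  assumes "2 \<le> card Y0"
  shows "H \<subseteq> K"
proof
  fix h assume "h \<in> H"
  have "\<not> Y0 \<subseteq> {y0}"
    using assms card_mono[of "{y0}" Y0] by auto
  then obtain z where "z \<in> Y0 - {y0}"
    by blast
  then have "(z + h) - z \<in> K"
    using diff_mem_coset_part add_mem_coset_part \<open>h \<in> H\<close> by blast
  then show "h \<in> K"
    by simp
qed

end

lemma reduced_qp_decomp_unique:
  assumes "reduced_qp_decomp K Y Y1 Y0"
  shows "Y1 = Y - {y0} \<and> Y0 = {y0}"
proof -
  have qp: "qp_decomp K Y Y1 Y0" and not_qp: "\<not> quasi_periodic Y0"
    using assms by (auto simp: reduced_qp_decomp_def)
  have "Y0 = {y0}"
  proof (rule ccontr)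
    assume "Y0 \<noteq> {y0}"
    then have "Y0 - {y0} \<noteq> {}"
      using y0_mem_coset_part[OF qp] by blast
    moreover have "periodic (Y0 - {y0})"
      using periodic_by_imp_periodic[OF subgrp nontrivial periodic_by_coset_part[OF qp]] .
    moreover have "in_one_coset (stab (Y0 - {y0})) {y0}"
      by (rule in_one_coset_singleton[OF zero_mem_stab])
    ultimately have "quasi_periodic Y0"
      unfolding quasi_periodic_def using y0_mem_coset_part[OF qp] by blast
    then show False
      using not_qp by blast
  qed
  then show ?thesis
    using qp_parts[OF qp] by blast
qed

lemma reps_alone_in_coset:
  assumes "sumset A B = Y" "x \<in> reps A B y0" "x' \<in> A" "x' - x \<in> H"
  shows "x' = x"
proof -
  have "x' + (y0 - x) \<in> Y"
    using assms(1-3) add_mem_sumset by (fastforce simp: reps_def)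
  moreover have "x' + (y0 - x) = y0 + (x' - x)"
    by (simp add: algebra_simps)
  ultimately have "y0 + (x' - x) \<in> Y"
    by simp
  then have "x' - x = 0"
    by (rule eq_zero_if_add_mem[OF assms(4)])
  then show ?thesis
    by simp
qed

lemma card_sumset_subgrp_ge:
  assumes "finite H" "finite A" "sumset A B = Y"
  shows "card A + card (reps A B y0) * card H \<le> card (sumset A H) + card (reps A B y0)"
proof -
  have "reps A B y0 \<subseteq> A"
    by (auto simp: reps_def)
  then have "card (A \<union> sumset (reps A B y0) H) + card (reps A B y0)
      = card A + card (reps A B y0) * card H"
    using card_Un_sumset_subgrp[OF subgrp assms(2,1)] reps_alone_in_coset[OF assms(3)] by blast
  moreover have "card (A \<union> sumset (reps A B y0) H) \<le> card (sumset A H)"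
    using Un_sumset_subgrp_subset[OF subgrp \<open>reps A B y0 \<subseteq> A\<close>] assms(1,2)
    by (intro card_mono finite_sumset)
  ultimately show ?thesis
    by linarith
qed

lemma card_sumset_punctured_le:
  assumes "finite H" "finite Y"
  shows "card (sumset Y H) \<le> card Y - 1 + card H"
proof -
  have "sumset Y H \<subseteq> (Y - {y0}) \<union> (+) y0 ` H"
  proof
    fix z assume "z \<in> sumset Y H"
    then obtain x h where "x \<in> Y" "h \<in> H" "z = x + h"
      by (auto simp: mem_sumset_iff)
    then show "z \<in> (Y - {y0}) \<union> (+) y0 ` H"
      using add_mem_punctured[of x h] by (cases "x = y0") auto
  qed
  then have "card (sumset Y H) \<le> card ((Y - {y0}) \<union> (+) y0 ` H)"
    using assms by (intro card_mono) auto
  also have "\<dots> \<le> card (Y - {y0}) + card ((+) y0 ` H)"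
    by (rule card_Un_le)
  also have "\<dots> = card Y - 1 + card H"
    using y0_mem assms(2) by (simp add: card_image)
  finally show ?thesis .
qed

lemma reps_sumset_subgrp_subset:
  assumes "sumset A B = Y"
  shows "reps (sumset A H) (sumset B H) y0 \<subseteq> sumset (reps A B y0) H"
proof
  fix x assume "x \<in> reps (sumset A H) (sumset B H) y0"
  then obtain x1 h1 x2 h2 where x: "x1 \<in> A" "h1 \<in> H" "x2 \<in> B" "h2 \<in> H" "x = x1 + h1"
      and "y0 - x = x2 + h2"
    by (auto simp: reps_def mem_sumset_iff)
  then have "y0 + - (h1 + h2) = x1 + x2"
    by (simp add: algebra_simps)
  moreover have "x1 + x2 \<in> Y"
    using assms x by (auto intro: add_mem_sumset)
  moreover have "- (h1 + h2) \<in> H"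
    using subgrp_uminus_mem[OF subgrp subgrp_add_mem[OF subgrp x(2,4)]] .
  ultimately have "- (h1 + h2) = 0"
    by (metis eq_zero_if_add_mem)
  then have "x1 \<in> reps A B y0"
    using \<open>y0 + - (h1 + h2) = x1 + x2\<close> x by (simp add: reps_def)
  then show "x \<in> sumset (reps A B y0) H"
    using x by (simp add: add_mem_sumset)
qed

lemma card_reps_sumset_subgrp_le:
  assumes "finite H" "finite A" "sumset A B = Y"
  shows "card (reps (sumset A H) (sumset B H) y0) \<le> card (reps A B y0) * card H"
proof -
  have "card (reps (sumset A H) (sumset B H) y0) \<le> card (sumset (reps A B y0) H)"
    using reps_sumset_subgrp_subset[OF assms(3)] assms(1,2)
    by (intro card_mono finite_sumset) (auto simp: reps_def)
  also have "\<dots> = card (reps A B y0) * card H"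
    using assms reps_alone_in_coset[OF assms(3)]
    by (intro card_sumset_subgrp[OF subgrp]) (auto simp: reps_def)
  finally show ?thesis .
qed

lemma card_saturations_le:
  assumes "finite H" "finite Y" "sumset A B = Y"
  shows "card (sumset A H) + card (sumset B H)
    \<le> card Y - 1 + card H + card (reps A B y0) * card H"
proof -
  obtain a b where ab: "a \<in> A" "b \<in> B" "y0 = a + b"
    using y0_mem assms(3) by (auto simp: mem_sumset_iff)
  have fin: "finite A" "finite B"
    using assms(2,3) ab finite_sumset_imp_finite[of A B] finite_sumset_imp_finite[of B A]
    by (auto simp: sumset_commute)
  have "a \<in> sumset A H" "b \<in> sumset B H"
    using ab add_mem_sumset[of _ _ 0 H] subgrp_zero_mem[OF subgrp] by force+
  then have "card (sumset A H) + card (sumset B H)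
      \<le> card (sumset Y H) + card (reps (sumset A H) (sumset B H) y0)"
    using kemperman_inequality[of "sumset A H" "sumset B H"] fin assms(1,3) ab(3)
    by (simp add: finite_sumset sumset_sumset_subgrp[OF subgrp])
  also have "\<dots> \<le> card Y - 1 + card H + card (reps A B y0) * card H"
    using card_sumset_punctured_le card_reps_sumset_subgrp_le assms fin(1)
    by (simp add: add_mono)
  finally show ?thesis .
qed

text \<open>With r representations of y0 and n = card H, the lower bounds for A + H and B + H
  against the upper bound for their sum give (r - 1) (n - 2) \<le> 0, so r = 1 as n \<ge> 3, and then
  A + H is no larger than A \<union> (a0 + H).\<close>

lemma critical_pair_counting:
  assumes "finite H" "finite Y" "sumset A B = Y" "card Y = card A + card B - 1"
  shows "card (reps A B y0) = 1 \<and> card (sumset A H) + 1 \<le> card A + card H"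
proof -
  obtain a b where ab: "a \<in> A" "b \<in> B" "y0 = a + b"
    using y0_mem assms(3) by (auto simp: mem_sumset_iff)
  have fin: "finite A" "finite B"
    using assms(2,3) ab finite_sumset_imp_finite[of A B] finite_sumset_imp_finite[of B A]
    by (auto simp: sumset_commute)
  then have "card A \<ge> 1" "card B \<ge> 1"
    using ab by (auto simp: Suc_le_eq card_gt_0_iff)
  define r where "r = card (reps A B y0)"
  define n where "n = card H"
  have "a \<in> reps A B y0"
    using ab by (simp add: reps_def)
  then have "1 \<le> r"
    using fin(1) by (auto simp: r_def reps_def card_gt_0_iff Suc_le_eq)
  have A_side: "card A + r * n \<le> card (sumset A H) + r"
    unfolding r_def n_def by (rule card_sumset_subgrp_ge[OF assms(1) fin(1) assms(3)])
  have B_side: "card B + r * n \<le> card (sumset B H) + r"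
    using card_sumset_subgrp_ge[OF assms(1) fin(2), of A] assms(3)
    by (simp add: r_def n_def sumset_commute card_reps_commute)
  have upper: "card (sumset A H) + card (sumset B H) \<le> card A + card B - 2 + n + r * n"
    using card_saturations_le[OF assms(1-3)] assms(4) by (simp add: r_def n_def)
  then have "r * n + 2 \<le> n + 2 * r"
    using A_side B_side \<open>card A \<ge> 1\<close> \<open>card B \<ge> 1\<close> by linarith
  moreover have "3 \<le> n"
    using large assms(1) by (simp add: n_def)
  ultimately have "r = 1"
    using \<open>1 \<le> r\<close> by (rule eq_one_if_mult_add_le)
  then show ?thesis
    using A_side B_side upper \<open>card A \<ge> 1\<close> \<open>card B \<ge> 1\<close> by (simp add: r_def n_def)
qed

lemma critical_pair_reps_singleton:
  assumes "finite H" "finite Y" "sumset A B = Y" "card Y = card A + card B - 1"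
  shows "\<exists>a0. reps A B y0 = {a0} \<and> periodic_by H (A - {a0})"
proof -
  obtain a0 where a0: "reps A B y0 = {a0}"
    using critical_pair_counting[OF assms] by (auto simp: card_Suc_eq)
  have fin: "finite A"
    using assms(2,3) a0 finite_sumset_imp_finite by (fastforce simp: reps_def)
  have "a0 \<in> reps A B y0"
    using a0 by simp
  then have "a0 \<in> A" and alone: "\<And>x. x \<in> A \<Longrightarrow> x - a0 \<in> H \<Longrightarrow> x = a0"
    using reps_alone_in_coset[OF assms(3)] by (auto simp: reps_def)
  have "A \<union> sumset {a0} H \<subseteq> sumset A H"
    using \<open>a0 \<in> A\<close> by (intro Un_sumset_subgrp_subset[OF subgrp]) simp
  moreover have "card (A \<union> sumset {a0} H) + 1 = card A + card H"
    using card_Un_sumset_subgrp[OF subgrp fin assms(1), of "{a0}"] \<open>a0 \<in> A\<close> alone by simp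
  then have "card (sumset A H) \<le> card (A \<union> sumset {a0} H)"
    using critical_pair_counting[OF assms] by linarith
  ultimately have "A \<union> sumset {a0} H = sumset A H"
    by (rule card_seteq[OF finite_sumset[OF fin assms(1)]])
  then have "sumset A H \<subseteq> A \<union> (+) a0 ` H"
    by (simp add: sumset_singleton)
  then have "periodic_by H (A - {a0})"
    using alone by (rule periodic_by_Diff_singleton[OF subgrp])
  then show ?thesis
    using a0 by blast
qed

lemma critical_pair_structure:
  assumes "finite Y" "sumset A B = Y" "card (sumset A B) = card A + card B - 1"
  shows "\<exists>a0\<in>A. \<exists>b0\<in>B. periodic_by H (A - {a0}) \<and> periodic_by H (B - {b0}) \<and> a0 + b0 = y0"
proof (cases "finite H")
  case True
  obtain a0 where a0: "reps A B y0 = {a0}" "periodic_by H (A - {a0})"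
    using critical_pair_reps_singleton[OF True assms(1,2)] assms(2,3) by auto
  obtain b0 where b0: "reps B A y0 = {b0}" "periodic_by H (B - {b0})"
    using critical_pair_reps_singleton[OF True assms(1), of B A] assms(2,3)
    by (auto simp: sumset_commute add.commute)
  have "a0 \<in> A" "y0 - a0 \<in> B"
    using a0(1) by (auto simp: reps_def)
  then have "y0 - a0 \<in> reps B A y0"
    by (simp add: reps_def)
  then have "b0 = y0 - a0"
    using b0(1) by simp
  then have "b0 \<in> B" "a0 + b0 = y0"
    using \<open>y0 - a0 \<in> B\<close> by simp_all
  then show ?thesis
    using \<open>a0 \<in> A\<close> a0(2) b0(2) by blast
next
  case False
  then have "Y = {y0}"
    using finite_periodic_by_eq_empty[OF periodic_punctured] assms(1) y0_mem by blast
  moreover obtain a b where "a \<in> A" "b \<in> B" "y0 = a + b"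
    using y0_mem assms(2) by (auto simp: mem_sumset_iff)
  ultimately have "A = {a}" "B = {b}"
    using sumset_eq_singletonD assms(2) by metis+
  then show ?thesis
    using \<open>y0 = a + b\<close> periodic_by_empty by auto
qed

end

theorem lemma2p5:
  fixes H Y :: "'a::ab_group_add set" and y0 :: 'a
  assumes "subgrp H" and "infinite H \<or> 3 \<le> card H"
    and "finite Y" and "y0 \<in> Y" and "periodic_by H (Y - {y0})"
  shows "aperiodic Y
    \<and> (\<exists>K. reduced_qp_decomp K Y (Y - {y0}) {y0})
    \<and> (\<forall>K Y1 Y0. reduced_qp_decomp K Y Y1 Y0 \<longrightarrow> Y1 = Y - {y0} \<and> Y0 = {y0})
    \<and> (\<forall>K Y1 Y0. qp_decomp K Y Y1 Y0 \<longrightarrow>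
          y0 \<in> Y0 \<and> periodic_by H (Y0 - {y0}) \<and> (2 \<le> card Y0 \<longrightarrow> H \<subseteq> K))
    \<and> (\<forall>A B. sumset A B = Y \<and> card (sumset A B) = card A + card B - 1 \<longrightarrow>
          (\<exists>a0\<in>A. \<exists>b0\<in>B. periodic_by H (A - {a0}) \<and> periodic_by H (B - {b0})
               \<and> a0 + b0 = y0))"
proof -
  interpret punctured_periodic H Y y0
    using assms(1,2,4,5) by unfold_locales
  have "\<forall>K Y1 Y0. reduced_qp_decomp K Y Y1 Y0 \<longrightarrow> Y1 = Y - {y0} \<and> Y0 = {y0}"
    using reduced_qp_decomp_unique by blast
  moreover have "\<forall>K Y1 Y0. qp_decomp K Y Y1 Y0 \<longrightarrow>
      y0 \<in> Y0 \<and> periodic_by H (Y0 - {y0}) \<and> (2 \<le> card Y0 \<longrightarrow> H \<subseteq> K)"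
    using y0_mem_coset_part periodic_by_coset_part subgrp_subset_if_two_le_card by blast
  moreover have "\<forall>A B. sumset A B = Y \<and> card (sumset A B) = card A + card B - 1 \<longrightarrow>
      (\<exists>a0\<in>A. \<exists>b0\<in>B. periodic_by H (A - {a0}) \<and> periodic_by H (B - {b0}) \<and> a0 + b0 = y0)"
    using critical_pair_structure[OF assms(3)] by blast
  ultimately show ?thesis
    using aperiodic reduced_qp_decomp_punctured by blast
qed

end
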